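(* Let $a>0$ and let $L_2=a\mathbb{Z}^3\cup a(\mathbb{Z}+\tfrac12)^3\cup W$. Then $$\sup_{x\in\mathbb{R}^3}\ \min_{p\in L_2}|x-p|=\frac{5\sqrt3}{24}a ,$$ and the set of points $x$ where this supremum is attained is exactly $$\Lambda=\Big\{p+\tfrac{5a}{24}(s_1,s_2,s_3):\ p\in a\mathbb{Z}^3\cup a(\mathbb{Z}+\tfrac12)^3,\ s_1,s_2,s_3\in\{-1,1\}\Big\}.$$ For example, $(5a/24,5a/24,5a/24)$ has exactly seven nearest points in $L_2$ at this distance: the origin and the six points $(0,a/4,a/2)$, $(0,a/2,a/4)$, $(a/4,a/2,0)$, $(a/2,a/4,0)$, $(a/4,0,a/2)$, $(a/2,0,a/4)$ of $W$.
   Context: Fix $a>0$. $W\subset\mathbb{R}^3$ is the set of all points $a(u_1,u_2,u_3)$ such that $(u_1,u_2,u_3)$ is a permutation of a triple $(i,\ j+\tfrac12,\ k+\varepsilon)$ with $i,j,k\in\mathbb{Z}$ and $\varepsilon\in\{\tfrac14,\tfrac34\}$. $|\cdot|$ is the Euclidean norm. *)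

theory Defs
  imports "HOL-Analysis.Analysis"
begin

definition pt :: "real \<Rightarrow> real \<Rightarrow> real \<Rightarrow> real^3" where
  "pt x y z = vector [x, y, z]"

definition perms3 :: "real \<times> real \<times> real \<Rightarrow> (real \<times> real \<times> real) set" where
  "perms3 t = (case t of (x, y, z) \<Rightarrow>
     {(x, y, z), (x, z, y), (y, x, z), (y, z, x), (z, x, y), (z, y, x)})"

definition Lint :: "real \<Rightarrow> (real^3) set" where
  "Lint a = {pt (a * of_int i) (a * of_int j) (a * of_int k) | i j k. True}"

definition Lhalf :: "real \<Rightarrow> (real^3) set" where
  "Lhalf a = {pt (a * (of_int i + 1/2)) (a * (of_int j + 1/2)) (a * (of_int k + 1/2)) | i j k. True}"

definition W :: "real \<Rightarrow> (real^3) set" where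
  "W a = {a *\<^sub>R pt u1 u2 u3 | u1 u2 u3. \<exists>(i::int) (j::int) (k::int) (\<epsilon>::real).
            \<epsilon> \<in> {1/4, 3/4} \<and> (u1, u2, u3) \<in> perms3 (of_int i, of_int j + 1/2, of_int k + \<epsilon>)}"

definition L2 :: "real \<Rightarrow> (real^3) set" where
  "L2 a = Lint a \<union> Lhalf a \<union> W a"

definition Lambda :: "real \<Rightarrow> (real^3) set" where
  "Lambda a = {p + (5 * a / 24) *\<^sub>R pt s1 s2 s3 | p s1 s2 s3.
                 p \<in> Lint a \<union> Lhalf a \<and> s1 \<in> {-1, 1} \<and> s2 \<in> {-1, 1} \<and> s3 \<in> {-1, 1}}"

end

theory Submission
  imports Defs
begin

text \<open>Scaling by \<open>a\<close> reduces everything to \<open>a = 1\<close>, where membership in \<open>L2\<close> and in \<open>\<Lambda>\<close> is a condition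
  on the residues of the coordinates mod 1.

  Lower bound: a coordinate \<open>\<equiv> \<plusminus>5/24\<close> is at distance at least \<open>5/24\<close>, \<open>7/24\<close>, \<open>1/24\<close> from
  \<open>\<int>\<close>, \<open>\<int> + 1/2\<close>, \<open>\<int> \<plusminus> 1/4\<close> respectively, so every point of \<open>L2\<close> is at squared distance at least
  \<open>3 (5/24)\<^sup>2 = 75/576\<close>; the points of \<open>\<Lambda>\<close> with coordinates \<open>\<equiv> 1/2 \<plusminus> 5/24\<close> are reduced to this case
  by \<open>t \<mapsto> 1/2 - t\<close>.

  Upper bound: the maps \<open>t \<mapsto> \<plusminus>t + n\<close> in each coordinate, \<open>t \<mapsto> 1/2 - t\<close> in all coordinates, and the
  permutations of coordinates preserve \<open>L2\<close>, \<open>\<Lambda>\<close> and distances. They move every point into the region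
  \<open>0 \<le> w \<le> v \<le> u \<le> 1/2, u + v + w \<le> 3/4\<close>, which is covered by three simplices with vertices in \<open>L2\<close>
  of circumradius at most \<open>5\<surd>3/24\<close>, with equality only at the circumcentre \<open>(5/24, 5/24, 5/24) \<in> \<Lambda>\<close>.\<close>

definition mod1_eq :: "real \<Rightarrow> real \<Rightarrow> bool" where
  "mod1_eq t c \<longleftrightarrow> t - c \<in> \<int>"

lemma mod1_eq_iff: "mod1_eq t c \<longleftrightarrow> (\<exists>i::int. t = of_int i + c)"
  unfolding mod1_eq_def Ints_def by (auto simp: algebra_simps)

lemma mod1_eq_add_Ints: "n \<in> \<int> \<Longrightarrow> mod1_eq (t + n) c \<longleftrightarrow> mod1_eq t c"
proof -
  assume "n \<in> \<int>"
  then have "t + n - c \<in> \<int> \<longleftrightarrow> (t - c) + n \<in> \<int>" by (simp add: algebra_simps)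
  also have "\<dots> \<longleftrightarrow> t - c \<in> \<int>" using \<open>n \<in> \<int>\<close> by (metis Ints_add Ints_diff add_diff_cancel)
  finally show ?thesis unfolding mod1_eq_def .
qed

lemma mod1_eq_uminus: "mod1_eq (- t) c \<longleftrightarrow> mod1_eq t (- c)"
proof -
  have "- t - c = - (t - - c)" by simp
  then show ?thesis unfolding mod1_eq_def by (metis minus_in_Ints_iff)
qed

lemma mod1_eq_cong: "c - c' \<in> \<int> \<Longrightarrow> mod1_eq t c \<longleftrightarrow> mod1_eq t c'"
proof -
  assume "c - c' \<in> \<int>"
  then have "mod1_eq (t + (c - c')) c \<longleftrightarrow> mod1_eq t c" by (rule mod1_eq_add_Ints)
  then show ?thesis unfolding mod1_eq_def by simp
qed

lemma mod1_eq_uminus_offset: "mod1_eq t (- c) \<longleftrightarrow> mod1_eq t (1 - c)"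
  by (rule mod1_eq_cong) simp

lemma mod1_eq_minus_left: "mod1_eq (a - t) c \<longleftrightarrow> mod1_eq t (a - c)"
proof -
  have "a - t - c = - (t - (a - c))" by simp
  then show ?thesis unfolding mod1_eq_def by (metis minus_in_Ints_iff)
qed

lemma mod1_eq_diff: "mod1_eq t c \<Longrightarrow> mod1_eq p d \<Longrightarrow> mod1_eq (t - p) (c - d)"
proof -
  have "t - p - (c - d) = (t - c) - (p - d)" by simp
  then show "mod1_eq t c \<Longrightarrow> mod1_eq p d \<Longrightarrow> mod1_eq (t - p) (c - d)"
    unfolding mod1_eq_def by (metis Ints_diff)
qed

lemma mod1_eq_unique:
  assumes "mod1_eq t c" "\<bar>t - c\<bar> < 1"
  shows "t = c"
proof -
  from assms obtain k :: int where "t = of_int k + c" "\<bar>real_of_int k\<bar> < 1"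
    unfolding mod1_eq_iff by auto
  then show ?thesis by simp
qed

lemma sq_le_sq_if_mod1_eq:
  assumes "mod1_eq x d" "0 \<le> b" "b \<le> \<bar>d\<bar>" "b \<le> 1 - \<bar>d\<bar>"
  shows "b\<^sup>2 \<le> x\<^sup>2"
proof -
  obtain k :: int where x: "x = of_int k + d"
    using assms(1) unfolding mod1_eq_iff by blast
  have "b \<le> \<bar>x\<bar>"
  proof (cases "k = 0")
    case False
    then have "1 \<le> \<bar>real_of_int k\<bar>" by linarith
    then show ?thesis using x assms(4) by linarith
  qed (use x assms(3) in simp)
  then show ?thesis using assms(2) abs_le_square_iff[of b x] by simp
qed

definition is_int :: "real \<Rightarrow> bool" where
  "is_int t \<longleftrightarrow> mod1_eq t 0"
definition is_half_int :: "real \<Rightarrow> bool" where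
  "is_half_int t \<longleftrightarrow> mod1_eq t (1/2)"
definition is_quarter_int :: "real \<Rightarrow> bool" where
  "is_quarter_int t \<longleftrightarrow> mod1_eq t (1/4) \<or> mod1_eq t (3/4)"
definition near_int :: "real \<Rightarrow> bool" where
  "near_int t \<longleftrightarrow> mod1_eq t (5/24) \<or> mod1_eq t (- 5/24)"
definition near_half_int :: "real \<Rightarrow> bool" where
  "near_half_int t \<longleftrightarrow> mod1_eq t (1/2 + 5/24) \<or> mod1_eq t (1/2 - 5/24)"

lemmas coord_class_defs = is_int_def is_half_int_def is_quarter_int_def near_int_def near_half_int_def

lemma coord_classes_add_Ints:
  assumes "n \<in> \<int>"
  shows "is_int (t + n) \<longleftrightarrow> is_int t" "is_half_int (t + n) \<longleftrightarrow> is_half_int t"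
    "is_quarter_int (t + n) \<longleftrightarrow> is_quarter_int t" "near_int (t + n) \<longleftrightarrow> near_int t"
    "near_half_int (t + n) \<longleftrightarrow> near_half_int t"
  unfolding coord_class_defs mod1_eq_add_Ints[OF assms] by simp_all

lemma coord_classes_uminus:
  "is_int (- t) \<longleftrightarrow> is_int t" "is_half_int (- t) \<longleftrightarrow> is_half_int t"
  "is_quarter_int (- t) \<longleftrightarrow> is_quarter_int t" "near_int (- t) \<longleftrightarrow> near_int t"
  "near_half_int (- t) \<longleftrightarrow> near_half_int t"
  unfolding coord_class_defs mod1_eq_uminus
  by (auto simp: mod1_eq_uminus_offset)

lemma coord_classes_half_minus:
  "is_int (1/2 - t) \<longleftrightarrow> is_half_int t" "is_half_int (1/2 - t) \<longleftrightarrow> is_int t"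
  "is_quarter_int (1/2 - t) \<longleftrightarrow> is_quarter_int t" "near_int (1/2 - t) \<longleftrightarrow> near_half_int t"
  "near_half_int (1/2 - t) \<longleftrightarrow> near_int t"
  unfolding coord_class_defs mod1_eq_minus_left by (simp_all add: mod1_eq_uminus_offset disj_commute)

lemma near_int_dist:
  assumes "near_int t"
  shows "is_int p \<Longrightarrow> (5/24)\<^sup>2 \<le> (t - p)\<^sup>2" "is_half_int p \<Longrightarrow> (7/24)\<^sup>2 \<le> (t - p)\<^sup>2"
    "is_quarter_int p \<Longrightarrow> (1/24)\<^sup>2 \<le> (t - p)\<^sup>2"
proof -
  have bound: "b\<^sup>2 \<le> (t - p)\<^sup>2"
    if "mod1_eq p d" "0 \<le> b" "b \<le> \<bar>5/24 - d\<bar>" "b \<le> 1 - \<bar>5/24 - d\<bar>"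
      "b \<le> \<bar>- 5/24 - d\<bar>" "b \<le> 1 - \<bar>- 5/24 - d\<bar>"
    for p d b
    using assms sq_le_sq_if_mod1_eq[OF mod1_eq_diff[OF _ that(1)] that(2)] that(3-6)
    unfolding near_int_def by auto
  show "is_int p \<Longrightarrow> (5/24)\<^sup>2 \<le> (t - p)\<^sup>2"
    unfolding is_int_def by (erule bound) simp_all
  show "is_half_int p \<Longrightarrow> (7/24)\<^sup>2 \<le> (t - p)\<^sup>2"
    unfolding is_half_int_def by (erule bound) simp_all
  show "is_quarter_int p \<Longrightarrow> (1/24)\<^sup>2 \<le> (t - p)\<^sup>2"
    unfolding is_quarter_int_def by (elim disjE; erule bound; simp)
qed

fun in_L2 :: "real \<times> real \<times> real \<Rightarrow> bool" where
  "in_L2 (u, v, w) \<longleftrightarrow>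
     (is_int u \<and> is_int v \<and> is_int w) \<or> (is_half_int u \<and> is_half_int v \<and> is_half_int w)
     \<or> (is_int u \<and> is_half_int v \<and> is_quarter_int w) \<or> (is_int u \<and> is_quarter_int v \<and> is_half_int w)
     \<or> (is_half_int u \<and> is_int v \<and> is_quarter_int w) \<or> (is_half_int u \<and> is_quarter_int v \<and> is_int w)
     \<or> (is_quarter_int u \<and> is_int v \<and> is_half_int w) \<or> (is_quarter_int u \<and> is_half_int v \<and> is_int w)"

fun in_Lambda :: "real \<times> real \<times> real \<Rightarrow> bool" where
  "in_Lambda (u, v, w) \<longleftrightarrow>
     (near_int u \<and> near_int v \<and> near_int w) \<or> (near_half_int u \<and> near_half_int v \<and> near_half_int w)"

fun sqdist3 :: "real \<times> real \<times> real \<Rightarrow> real \<times> real \<times> real \<Rightarrow> real" where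
  "sqdist3 (u, v, w) (p, q, r) = (u - p)\<^sup>2 + (v - q)\<^sup>2 + (w - r)\<^sup>2"

lemma sqdist3_nonneg: "0 \<le> sqdist3 x y"
  by (cases x; cases y) simp

lemma sqdist3_pos: "x \<noteq> y \<Longrightarrow> 0 < sqdist3 x y"
proof -
  assume "x \<noteq> y"
  obtain u v w p q r where "x = (u, v, w)" "y = (p, q, r)" by (cases x; cases y)
  moreover from calculation \<open>x \<noteq> y\<close> have "u \<noteq> p \<or> v \<noteq> q \<or> w \<noteq> r" by auto
  then have "0 < (u - p)\<^sup>2 \<or> 0 < (v - q)\<^sup>2 \<or> 0 < (w - r)\<^sup>2" by simp
  moreover have "0 \<le> (u - p)\<^sup>2" "0 \<le> (v - q)\<^sup>2" "0 \<le> (w - r)\<^sup>2" by simp_all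
  ultimately show ?thesis by (simp only: sqdist3.simps) linarith
qed

definition coord_symmetry :: "(real \<Rightarrow> real) \<Rightarrow> bool" where
  "coord_symmetry f \<longleftrightarrow> (\<forall>t. (is_int (f t) \<longleftrightarrow> is_int t) \<and> (is_half_int (f t) \<longleftrightarrow> is_half_int t)
     \<and> (is_quarter_int (f t) \<longleftrightarrow> is_quarter_int t) \<and> (near_int (f t) \<longleftrightarrow> near_int t)
     \<and> (near_half_int (f t) \<longleftrightarrow> near_half_int t)) \<and> (\<forall>a b. \<bar>f a - f b\<bar> = \<bar>a - b\<bar>)"

lemma coord_symmetry_affine:
  assumes "s \<in> {-1, 1}" "n \<in> \<int>"
  shows "coord_symmetry (\<lambda>t. s * t + n)"
  using assms unfolding coord_symmetry_def
  by (auto simp: coord_classes_add_Ints coord_classes_uminus abs_minus_commute)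

lemma coord_symmetryD:
  assumes "coord_symmetry f"
  shows "is_int (f t) \<longleftrightarrow> is_int t" "is_half_int (f t) \<longleftrightarrow> is_half_int t"
    "is_quarter_int (f t) \<longleftrightarrow> is_quarter_int t" "near_int (f t) \<longleftrightarrow> near_int t"
    "near_half_int (f t) \<longleftrightarrow> near_half_int t" "(f a - f b)\<^sup>2 = (a - b)\<^sup>2"
  using assms unfolding coord_symmetry_def by (metis power2_abs)+

definition L2_symmetry :: "(real \<times> real \<times> real \<Rightarrow> real \<times> real \<times> real) \<Rightarrow> bool" where
  "L2_symmetry g \<longleftrightarrow> (\<forall>x. in_L2 (g x) \<longleftrightarrow> in_L2 x) \<and> (\<forall>x. in_Lambda (g x) \<longleftrightarrow> in_Lambda x)
     \<and> (\<forall>x y. sqdist3 (g x) (g y) = sqdist3 x y)"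

lemma L2_symmetryD:
  assumes "L2_symmetry g"
  shows "in_L2 (g x) \<longleftrightarrow> in_L2 x" "in_Lambda (g x) \<longleftrightarrow> in_Lambda x" "sqdist3 (g x) (g y) = sqdist3 x y"
  using assms unfolding L2_symmetry_def by blast+

lemma L2_symmetry_coordwise:
  assumes "coord_symmetry f" "coord_symmetry g" "coord_symmetry h"
  shows "L2_symmetry (map_prod f (map_prod g h))"
  unfolding L2_symmetry_def
  by (auto simp: coord_symmetryD[OF assms(1)] coord_symmetryD[OF assms(2)] coord_symmetryD[OF assms(3)])

lemma L2_symmetry_half_complement: "L2_symmetry (map_prod ((-) (1/2)) (map_prod ((-) (1/2)) ((-) (1/2))))"
  unfolding L2_symmetry_def by (auto simp: coord_classes_half_minus power2_commute)

lemma L2_symmetry_swaps: "L2_symmetry (\<lambda>(u, v, w). (v, u, w))" "L2_symmetry (\<lambda>(u, v, w). (u, w, v))"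
  unfolding L2_symmetry_def by auto

lemma near_int_five_24: "near_int (5/24)"
  unfolding near_int_def mod1_eq_def by simp

lemma near_center_coord:
  "is_int p \<Longrightarrow> (5/24 - p)\<^sup>2 \<le> (5/24)\<^sup>2 \<Longrightarrow> p = 0"
  "is_half_int p \<Longrightarrow> (5/24 - p)\<^sup>2 \<le> (7/24)\<^sup>2 \<Longrightarrow> p = 1/2"
  "is_quarter_int p \<Longrightarrow> (5/24 - p)\<^sup>2 \<le> (1/24)\<^sup>2 \<Longrightarrow> p = 1/4"
proof -
  have close: "\<bar>p - c\<bar> < 1" if "(5/24 - p)\<^sup>2 \<le> b\<^sup>2" "0 \<le> b" "\<bar>5/24 - c\<bar> + b < 1" for b c :: real
  proof -
    have "\<bar>5/24 - p\<bar> \<le> b" using that(1,2) abs_le_square_iff[of "5/24 - p" b] by simp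
    then show ?thesis using that(3) by (auto simp: abs_le_iff abs_less_iff split: abs_split)
  qed
  show "is_int p \<Longrightarrow> (5/24 - p)\<^sup>2 \<le> (5/24)\<^sup>2 \<Longrightarrow> p = 0"
    unfolding is_int_def by (erule mod1_eq_unique, erule close) simp_all
  show "is_half_int p \<Longrightarrow> (5/24 - p)\<^sup>2 \<le> (7/24)\<^sup>2 \<Longrightarrow> p = 1/2"
    unfolding is_half_int_def by (erule mod1_eq_unique, erule close) simp_all
  assume "is_quarter_int p" and sq: "(5/24 - p)\<^sup>2 \<le> (1/24)\<^sup>2"
  moreover have "(1/24::real)\<^sup>2 < (5/24 - 3/4)\<^sup>2" by (simp add: power_divide)
  then have "p \<noteq> 3/4" using sq by (metis not_le)
  ultimately show "p = 1/4"
    unfolding is_quarter_int_def using close[of "1/24"] mod1_eq_unique[of p "1/4"] mod1_eq_unique[of p "3/4"]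
    by auto
qed

lemma nearest_L2_points_to_center:
  assumes "in_L2 y" "sqdist3 (5/24, 5/24, 5/24) y \<le> 75/576"
  shows "y \<in> {(0, 0, 0), (0, 1/4, 1/2), (0, 1/2, 1/4), (1/4, 1/2, 0), (1/2, 1/4, 0), (1/4, 0, 1/2), (1/2, 0, 1/4)}"
proof -
  obtain p q r where y: "y = (p, q, r)" by (cases y)
  have sum: "(5/24 - p)\<^sup>2 + (5/24 - q)\<^sup>2 + (5/24 - r)\<^sup>2 \<le> 75/576"
    using assms(2) y by simp
  note lb = near_int_dist[OF near_int_five_24] and ub = near_center_coord
  \<comment> \<open>except for \<open>(\<int> + 1/2)\<^sup>3\<close>, the coordinatewise minima of each class pattern of \<open>L2\<close> add up
    to exactly \<open>75/576\<close>, so every coordinate attains its minimum\<close>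
  have pin: "(p, q, r) = (p0, q0, r0)"
    if "a \<le> (5/24 - p)\<^sup>2" "b \<le> (5/24 - q)\<^sup>2" "c \<le> (5/24 - r)\<^sup>2" "a + b + c = 75/576"
      "(5/24 - p)\<^sup>2 \<le> a \<Longrightarrow> p = p0" "(5/24 - q)\<^sup>2 \<le> b \<Longrightarrow> q = q0"
      "(5/24 - r)\<^sup>2 \<le> c \<Longrightarrow> r = r0"
    for a b c p0 q0 r0
  proof -
    have "(5/24 - p)\<^sup>2 \<le> a" "(5/24 - q)\<^sup>2 \<le> b" "(5/24 - r)\<^sup>2 \<le> c"
      using that(1-4) sum by linarith+
    then show ?thesis using that(5-7) by simp
  qed
  have "in_L2 (p, q, r)" using assms(1) y by simp
  then have "(p, q, r) \<in> {(0, 0, 0), (0, 1/4, 1/2), (0, 1/2, 1/4), (1/4, 1/2, 0), (1/2, 1/4, 0),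
      (1/4, 0, 1/2), (1/2, 0, 1/4)}"
    unfolding in_L2.simps
  proof (elim disjE conjE)
    assume h: "is_int p" "is_int q" "is_int r"
    show ?thesis using pin[OF lb(1)[OF h(1)] lb(1)[OF h(2)] lb(1)[OF h(3)] _ ub(1)[OF h(1)] ub(1)[OF h(2)]
      ub(1)[OF h(3)]] by (simp add: power_divide)
  next
    assume h: "is_half_int p" "is_half_int q" "is_half_int r"
    then show ?thesis using sum lb(2)[OF h(1)] lb(2)[OF h(2)] lb(2)[OF h(3)] by (simp add: power_divide)
  next
    assume h: "is_int p" "is_half_int q" "is_quarter_int r"
    show ?thesis using pin[OF lb(1)[OF h(1)] lb(2)[OF h(2)] lb(3)[OF h(3)] _ ub(1)[OF h(1)] ub(2)[OF h(2)]
      ub(3)[OF h(3)]] by (simp add: power_divide)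
  next
    assume h: "is_int p" "is_quarter_int q" "is_half_int r"
    show ?thesis using pin[OF lb(1)[OF h(1)] lb(3)[OF h(2)] lb(2)[OF h(3)] _ ub(1)[OF h(1)] ub(3)[OF h(2)]
      ub(2)[OF h(3)]] by (simp add: power_divide)
  next
    assume h: "is_half_int p" "is_int q" "is_quarter_int r"
    show ?thesis using pin[OF lb(2)[OF h(1)] lb(1)[OF h(2)] lb(3)[OF h(3)] _ ub(2)[OF h(1)] ub(1)[OF h(2)]
      ub(3)[OF h(3)]] by (simp add: power_divide)
  next
    assume h: "is_half_int p" "is_quarter_int q" "is_int r"
    show ?thesis using pin[OF lb(2)[OF h(1)] lb(3)[OF h(2)] lb(1)[OF h(3)] _ ub(2)[OF h(1)] ub(3)[OF h(2)]
      ub(1)[OF h(3)]] by (simp add: power_divide)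
  next
    assume h: "is_quarter_int p" "is_int q" "is_half_int r"
    show ?thesis using pin[OF lb(3)[OF h(1)] lb(1)[OF h(2)] lb(2)[OF h(3)] _ ub(3)[OF h(1)] ub(1)[OF h(2)]
      ub(2)[OF h(3)]] by (simp add: power_divide)
  next
    assume h: "is_quarter_int p" "is_half_int q" "is_int r"
    show ?thesis using pin[OF lb(3)[OF h(1)] lb(2)[OF h(2)] lb(1)[OF h(3)] _ ub(3)[OF h(1)] ub(2)[OF h(2)]
      ub(1)[OF h(3)]] by (simp add: power_divide)
  qed
  then show ?thesis using y by simp
qed

lemma sqdist3_Lambda_L2_ge:
  assumes "in_Lambda x" "in_L2 y"
  shows "75/576 \<le> sqdist3 x y"
proof -
  have near_int_case: "75/576 \<le> sqdist3 (u, v, w) y"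
    if "near_int u" "near_int v" "near_int w" "in_L2 y" for u v w y
  proof -
    obtain p q r where y: "y = (p, q, r)" by (cases y)
    note d = near_int_dist[OF that(1), of p] near_int_dist[OF that(2), of q] near_int_dist[OF that(3), of r]
    have "in_L2 (p, q, r)" using that(4) y by simp
    then show ?thesis unfolding y in_L2.simps sqdist3.simps
      by (elim disjE conjE) (auto simp: power_divide dest!: d)
  qed
  show ?thesis
  proof (cases x)
    case (fields u v w)
    consider "near_int u" "near_int v" "near_int w" | "near_half_int u" "near_half_int v" "near_half_int w"
      using assms(1) fields by auto
    then show ?thesis
    proof cases
      case 1
      then show ?thesis using near_int_case assms(2) fields by blast
    next
      case 2
      let ?c = "map_prod ((-) (1/2)) (map_prod ((-) (1/2)) ((-) (1/2)))"
      note sym = L2_symmetryD[OF L2_symmetry_half_complement]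
      have "75/576 \<le> sqdist3 (1/2 - u, 1/2 - v, 1/2 - w) (?c y)"
        using 2 assms(2) by (intro near_int_case) (simp_all add: coord_classes_half_minus sym(1))
      then show ?thesis using sym(3)[of x y] fields by simp
    qed
  qed
qed

definition covered :: "real \<times> real \<times> real \<Rightarrow> bool" where
  "covered x \<longleftrightarrow>
     (\<exists>y. in_L2 y \<and> sqdist3 x y \<le> 75/576 \<and> (\<not> in_Lambda x \<longrightarrow> sqdist3 x y < 75/576))"

lemma coveredI:
  assumes "in_L2 y" "sqdist3 x y \<le> 75/576 - e" "0 \<le> e" "\<not> in_Lambda x \<Longrightarrow> 0 < e"
  shows "covered x"
  unfolding covered_def using assms by (smt (verit))

lemma covered_L2_symmetry:
  assumes "covered x" "L2_symmetry g"
  shows "covered (g x)"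
proof -
  obtain y where "in_L2 y" "sqdist3 x y \<le> 75/576" "\<not> in_Lambda x \<longrightarrow> sqdist3 x y < 75/576"
    using assms(1) unfolding covered_def by blast
  then show ?thesis
    unfolding covered_def using L2_symmetryD[OF assms(2)] by (intro exI[of _ "g y"]) simp
qed

lemma ex_le_if_weighted_average_le:
  fixes l0 l1 l2 l3 e0 e1 e2 e3 m :: real
  assumes "0 \<le> l0" "0 \<le> l1" "0 \<le> l2" "0 \<le> l3" "l0 + l1 + l2 + l3 = 1"
    "l0 * e0 + l1 * e1 + l2 * e2 + l3 * e3 \<le> m"
  shows "e0 \<le> m \<or> e1 \<le> m \<or> e2 \<le> m \<or> e3 \<le> m"
proof -
  define \<mu> where "\<mu> = min (min e0 e1) (min e2 e3)"
  have "l0 * \<mu> + l1 * \<mu> + l2 * \<mu> + l3 * \<mu> \<le> l0 * e0 + l1 * e1 + l2 * e2 + l3 * e3"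
    using assms(1-4) by (intro add_mono mult_left_mono) (auto simp: \<mu>_def)
  also have "l0 * \<mu> + l1 * \<mu> + l2 * \<mu> + l3 * \<mu> = \<mu>"
    using assms(5) by (metis distrib_right mult_1)
  finally have "\<mu> \<le> m" using assms(6) by linarith
  then show ?thesis unfolding \<mu>_def by linarith
qed

lemma covered_by_simplex:
  assumes "in_L2 p0" "in_L2 p1" "in_L2 p2" "in_L2 p3"
    "0 \<le> l0" "0 \<le> l1" "0 \<le> l2" "0 \<le> l3" "l0 + l1 + l2 + l3 = 1"
    "l0 * sqdist3 x p0 + l1 * sqdist3 x p1 + l2 * sqdist3 x p2 + l3 * sqdist3 x p3 \<le> 75/576 - e"
    "0 \<le> e" "\<not> in_Lambda x \<Longrightarrow> 0 < e"
  shows "covered x"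
  using ex_le_if_weighted_average_le[OF assms(5-10)] coveredI[OF _ _ assms(11,12)] assms(1-4) by blast

lemma in_L2_points:
  "in_L2 (0, 0, 0)" "in_L2 (1/2, 1/4, 0)" "in_L2 (1/4, 1/2, 0)" "in_L2 (0, 1/4, 1/2)" "in_L2 (0, 1/2, 1/4)"
  "in_L2 (1/2, 0, 1/4)" "in_L2 (1/4, 0, 1/2)" "in_L2 (1/2, 0, - 1/4)"
  by (simp_all add: coord_class_defs mod1_eq_def)

lemma in_Lambda_center: "in_Lambda (5/24, 5/24, 5/24)"
  using near_int_five_24 by simp

text \<open>The three cases below are simplices with vertices in \<open>L2\<close>, each covered by its circumsphere: if the
  \<open>p\<^sub>i\<close> lie on a sphere of radius \<open>\<rho>\<close> about \<open>z\<close> and \<open>\<lambda>\<close> are barycentric coordinates of \<open>x\<close>, then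
  \<open>\<Sum> \<lambda>\<^sub>i |x - p\<^sub>i|\<^sup>2 = \<rho>\<^sup>2 - |x - z|\<^sup>2\<close>. The first two have circumcentre \<open>(5/24, 5/24, 5/24) \<in> \<Lambda>\<close>,
  the third has the smaller circumradius \<open>5/16\<close>.\<close>

lemma covered_fundamental_region:
  assumes "0 \<le> w" "w \<le> v" "v \<le> u" "u \<le> 1/2" "u + v + w \<le> 3/4"
  shows "covered (u, v, w)"
proof (cases "u \<le> 2 * (v + w)")
  case True
  let ?x = "(u, v, w)" and ?e = "sqdist3 (u, v, w) (5/24, 5/24, 5/24)"
  have "0 < ?e" if "\<not> in_Lambda ?x"
    using that in_Lambda_center by (intro sqdist3_pos) blast
  note simplex = covered_by_simplex[OF in_L2_points(1,2) _ _ _ _ _ _ _ _ sqdist3_nonneg this]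
  show ?thesis
  proof (cases "u + w \<le> 2 * v")
    case True
    have "(1 - 4 * (u + v + w) / 3) * sqdist3 ?x (0, 0, 0) + ((8 * u + 2 * w - 4 * v) / 3) * sqdist3 ?x (1/2, 1/4, 0)
      + ((8 * v - 4 * u - 4 * w) / 3) * sqdist3 ?x (1/4, 1/2, 0) + (2 * w) * sqdist3 ?x (0, 1/4, 1/2)
      = 75/576 - ?e"
      by (simp add: power2_eq_square field_simps)
    from simplex[OF in_L2_points(3,4) _ _ _ _ _ this[THEN eq_refl]] show ?thesis
      using assms True \<open>u \<le> 2 * (v + w)\<close> by (simp add: field_simps)
  next
    case False
    have "(1 - 4 * (u + v + w) / 3) * sqdist3 ?x (0, 0, 0) + ((4 * u - 8 * w + 16 * v) / 6) * sqdist3 ?x (1/2, 1/4, 0)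
      + ((8 * v - 4 * u + 8 * w) / 6) * sqdist3 ?x (0, 1/4, 1/2) + ((4 * u + 4 * w - 8 * v) / 3) * sqdist3 ?x (1/2, 0, 1/4)
      = 75/576 - ?e"
      by (simp add: power2_eq_square field_simps)
    from simplex[OF in_L2_points(4,6) _ _ _ _ _ this[THEN eq_refl]] show ?thesis
      using assms False \<open>u \<le> 2 * (v + w)\<close> by (simp add: field_simps)
  qed
next
  case False
  let ?x = "(u, v, w)"
  have "(1 - 2 * u) * sqdist3 ?x (0, 0, 0) + (4 * v) * sqdist3 ?x (1/2, 1/4, 0)
      + (u - 2 * v + 2 * w) * sqdist3 ?x (1/2, 0, 1/4) + (u - 2 * v - 2 * w) * sqdist3 ?x (1/2, 0, - 1/4)
      = 25/256 - sqdist3 ?x (5/16, 0, 0)" (is "?average = _")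
    by (simp add: power2_eq_square field_simps)
  also have "\<dots> \<le> 75/576 - 1/100"
    using sqdist3_nonneg[of ?x "(5/16, 0, 0)"] by linarith
  finally have "?average \<le> 75/576 - 1/100" .
  from covered_by_simplex[OF in_L2_points(1,2,6,8) _ _ _ _ _ this] show ?thesis
    using assms False by (simp add: field_simps)
qed

lemma covered_swap: "covered (v, u, w) \<longleftrightarrow> covered (u, v, w)" "covered (u, w, v) \<longleftrightarrow> covered (u, v, w)"
proof -
  have swap12: "covered (b, a, c)" if "covered (a, b, c)" for a b c
    using covered_L2_symmetry[OF that L2_symmetry_swaps(1)] by simp
  have swap23: "covered (a, c, b)" if "covered (a, b, c)" for a b c
    using covered_L2_symmetry[OF that L2_symmetry_swaps(2)] by simp
  show "covered (v, u, w) \<longleftrightarrow> covered (u, v, w)" "covered (u, w, v) \<longleftrightarrow> covered (u, v, w)"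
    using swap12 swap23 by blast+
qed

lemma covered_small_corner:
  assumes "0 \<le> u" "0 \<le> v" "0 \<le> w" "u \<le> 1/2" "v \<le> 1/2" "w \<le> 1/2" "u + v + w \<le> 3/4"
  shows "covered (u, v, w)"
proof -
  consider "w \<le> v" "v \<le> u" | "v \<le> w" "w \<le> u" | "w \<le> u" "u \<le> v" | "u \<le> w" "w \<le> v"
    | "v \<le> u" "u \<le> w" | "u \<le> v" "v \<le> w"
    by linarith
  then show ?thesis
  proof cases
    case 1
    then show ?thesis using covered_fundamental_region[of w v u] assms by simp
  next
    case 2
    then show ?thesis using covered_fundamental_region[of v w u] assms by (simp add: covered_swap)
  next
    case 3
    then show ?thesis using covered_fundamental_region[of w u v] assms by (simp add: covered_swap)
  next
    case 4
    then show ?thesis using covered_fundamental_region[of u w v] assms by (simp add: covered_swap)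
  next
    case 5
    then show ?thesis using covered_fundamental_region[of v u w] assms by (simp add: covered_swap)
  next
    case 6
    then show ?thesis using covered_fundamental_region[of u v w] assms by (simp add: covered_swap)
  qed
qed

lemma covered_box:
  assumes "0 \<le> u" "0 \<le> v" "0 \<le> w" "u \<le> 1/2" "v \<le> 1/2" "w \<le> 1/2"
  shows "covered (u, v, w)"
proof (cases "u + v + w \<le> 3/4")
  case False
  then have "covered (1/2 - u, 1/2 - v, 1/2 - w)"
    using assms by (intro covered_small_corner) simp_all
  then show ?thesis using covered_L2_symmetry[OF _ L2_symmetry_half_complement] by fastforce
qed (use assms covered_small_corner in simp)

lemma fold_into_half_unit:
  fixes t :: real
  shows "\<exists>s\<in>{-1, 1}. \<exists>n\<in>\<int>. \<exists>t'. 0 \<le> t' \<and> t' \<le> 1/2 \<and> t = s * t' + n"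
proof (cases "t - \<lfloor>t\<rfloor> \<le> 1/2")
  case True
  then show ?thesis by (intro bexI[of _ 1] bexI[of _ "of_int \<lfloor>t\<rfloor>"] exI[of _ "t - \<lfloor>t\<rfloor>"]) auto
next
  case False
  then show ?thesis
    by (intro bexI[of _ "-1"] bexI[of _ "of_int \<lfloor>t\<rfloor> + 1"] exI[of _ "\<lfloor>t\<rfloor> + 1 - t"]) auto
qed

lemma covered_everywhere: "covered x"
proof -
  obtain t1 t2 t3 where x: "x = (t1, t2, t3)" by (cases x)
  obtain s1 n1 u where "s1 \<in> {-1, 1}" "n1 \<in> \<int>" "0 \<le> u" "u \<le> 1/2" "t1 = s1 * u + n1"
    using fold_into_half_unit by meson
  moreover obtain s2 n2 v where "s2 \<in> {-1, 1}" "n2 \<in> \<int>" "0 \<le> v" "v \<le> 1/2" "t2 = s2 * v + n2"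
    using fold_into_half_unit by meson
  moreover obtain s3 n3 w where "s3 \<in> {-1, 1}" "n3 \<in> \<int>" "0 \<le> w" "w \<le> 1/2" "t3 = s3 * w + n3"
    using fold_into_half_unit by meson
  ultimately show ?thesis
    using covered_L2_symmetry[OF covered_box[of u v w] L2_symmetry_coordwise[OF coord_symmetry_affine
        coord_symmetry_affine coord_symmetry_affine]] x
    by simp
qed

lemma is_int_iff: "is_int t \<longleftrightarrow> (\<exists>i::int. t = of_int i)"
  unfolding is_int_def mod1_eq_iff by simp

lemma is_half_int_iff: "is_half_int t \<longleftrightarrow> (\<exists>i::int. t = of_int i + 1/2)"
  unfolding is_half_int_def mod1_eq_iff ..

lemma is_quarter_int_iff: "is_quarter_int t \<longleftrightarrow> (\<exists>(i::int) (\<epsilon>::real). \<epsilon> \<in> {1/4, 3/4} \<and> t = of_int i + \<epsilon>)"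
  unfolding is_quarter_int_def mod1_eq_iff by blast

lemma near_int_iff: "near_int t \<longleftrightarrow> (\<exists>s\<in>{-1, 1}. is_int (t - 5/24 * s))"
  unfolding near_int_def is_int_def mod1_eq_def by auto

lemma near_half_int_iff: "near_half_int t \<longleftrightarrow> (\<exists>s\<in>{-1, 1}. is_half_int (t - 5/24 * s))"
  unfolding near_half_int_def is_half_int_def mod1_eq_def by (auto simp: algebra_simps)

definition coords :: "real \<Rightarrow> real^3 \<Rightarrow> real \<times> real \<times> real" where
  "coords a x = (x$1 / a, x$2 / a, x$3 / a)"

lemma pt_nth [simp]: "pt x y z $ 1 = x" "pt x y z $ 2 = y" "pt x y z $ 3 = z"
  by (simp_all add: pt_def)

lemma eq_scaled_pt_iff:
  assumes "a \<noteq> 0"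
  shows "x = pt (a * u) (a * v) (a * w) \<longleftrightarrow> coords a x = (u, v, w)"
  using assms unfolding coords_def vec_eq_iff forall_3 by (auto simp: field_simps)

lemma coords_scaled_pt: "a \<noteq> 0 \<Longrightarrow> coords a (pt (a * u) (a * v) (a * w)) = (u, v, w)"
  using eq_scaled_pt_iff by blast

lemma norm_eq_sqdist3_coords:
  assumes "0 < a"
  shows "norm (x - y) = a * sqrt (sqdist3 (coords a x) (coords a y))"
proof -
  have "norm (x - y) = sqrt ((x$1 - y$1)\<^sup>2 + (x$2 - y$2)\<^sup>2 + (x$3 - y$3)\<^sup>2)"
    unfolding norm_vec_def L2_set_def sum_3 by simp
  also have "(x$1 - y$1)\<^sup>2 + (x$2 - y$2)\<^sup>2 + (x$3 - y$3)\<^sup>2 = a\<^sup>2 * sqdist3 (coords a x) (coords a y)"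
    using assms unfolding coords_def by (simp add: power2_eq_square field_simps)
  finally show ?thesis using assms by (simp add: real_sqrt_mult)
qed

lemma mem_Lint_iff:
  assumes "0 < a"
  shows "x \<in> Lint a \<longleftrightarrow> is_int (x$1 / a) \<and> is_int (x$2 / a) \<and> is_int (x$3 / a)"
  unfolding Lint_def is_int_iff using eq_scaled_pt_iff[of a x] assms by (auto simp: coords_def)

lemma mem_Lhalf_iff:
  assumes "0 < a"
  shows "x \<in> Lhalf a \<longleftrightarrow> is_half_int (x$1 / a) \<and> is_half_int (x$2 / a) \<and> is_half_int (x$3 / a)"
  unfolding Lhalf_def is_half_int_iff using eq_scaled_pt_iff[of a x] assms by (auto simp: coords_def)

lemma scaleR_pt: "c *\<^sub>R pt x y z = pt (c * x) (c * y) (c * z)"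
  unfolding vec_eq_iff forall_3 by simp

lemma mem_W_iff:
  assumes "0 < a"
  shows "x \<in> W a \<longleftrightarrow>
    (\<exists>(i::int) (j::int) (k::int) (\<epsilon>::real). \<epsilon> \<in> {1/4, 3/4} \<and>
       coords a x \<in> perms3 (of_int i, of_int j + 1/2, of_int k + \<epsilon>))"
proof -
  have "x \<in> W a \<longleftrightarrow> (\<exists>u1 u2 u3. coords a x = (u1, u2, u3) \<and>
     (\<exists>(i::int) (j::int) (k::int) (\<epsilon>::real). \<epsilon> \<in> {1/4, 3/4} \<and>
        (u1, u2, u3) \<in> perms3 (of_int i, of_int j + 1/2, of_int k + \<epsilon>)))"
    unfolding W_def scaleR_pt eq_scaled_pt_iff[OF less_imp_neq[OF assms, symmetric]] by blast
  then show ?thesis by (cases "coords a x") simp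
qed

lemma in_perms3_iff:
  "(\<exists>(i::int) (j::int) (k::int) (\<epsilon>::real). \<epsilon> \<in> {1/4, 3/4} \<and>
       (u, v, w) \<in> perms3 (of_int i, of_int j + 1/2, of_int k + \<epsilon>)) \<longleftrightarrow>
     (is_int u \<and> is_half_int v \<and> is_quarter_int w) \<or> (is_int u \<and> is_quarter_int v \<and> is_half_int w)
     \<or> (is_half_int u \<and> is_int v \<and> is_quarter_int w) \<or> (is_half_int u \<and> is_quarter_int v \<and> is_int w)
     \<or> (is_quarter_int u \<and> is_int v \<and> is_half_int w) \<or> (is_quarter_int u \<and> is_half_int v \<and> is_int w)"
  unfolding perms3_def is_int_iff is_half_int_iff is_quarter_int_iff by simp blast

lemma mem_L2_iff: "0 < a \<Longrightarrow> x \<in> L2 a \<longleftrightarrow> in_L2 (coords a x)"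
  unfolding L2_def using mem_Lint_iff mem_Lhalf_iff mem_W_iff in_perms3_iff
  by (simp add: coords_def)

lemma mem_Lambda_iff:
  assumes "0 < a"
  shows "x \<in> Lambda a \<longleftrightarrow> in_Lambda (coords a x)"
proof -
  have shift: "(x - (5 * a / 24) *\<^sub>R pt s1 s2 s3) $ i / a = x $ i / a - 5/24 * s"
    if "pt s1 s2 s3 $ i = s" for s1 s2 s3 s i
    using that assms by (simp add: field_simps)
  have "x \<in> Lambda a \<longleftrightarrow> (\<exists>s1\<in>{-1, 1}. \<exists>s2\<in>{-1, 1}. \<exists>s3\<in>{-1, 1}.
      x - (5 * a / 24) *\<^sub>R pt s1 s2 s3 \<in> Lint a \<union> Lhalf a)"
    unfolding Lambda_def by (force simp: eq_diff_eq[symmetric])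
  also have "\<dots> \<longleftrightarrow> (\<exists>s1\<in>{-1, 1}. \<exists>s2\<in>{-1, 1}. \<exists>s3\<in>{-1, 1}.
      (is_int (x$1 / a - 5/24 * s1) \<and> is_int (x$2 / a - 5/24 * s2) \<and> is_int (x$3 / a - 5/24 * s3))
      \<or> (is_half_int (x$1 / a - 5/24 * s1) \<and> is_half_int (x$2 / a - 5/24 * s2)
        \<and> is_half_int (x$3 / a - 5/24 * s3)))"
    unfolding Un_iff mem_Lint_iff[OF assms] mem_Lhalf_iff[OF assms] by (simp only: shift pt_nth)
  also have "\<dots> \<longleftrightarrow> in_Lambda (coords a x)"
    unfolding coords_def in_Lambda.simps near_int_iff near_half_int_iff by blast
  finally show ?thesis .
qed

definition covering_radius :: "real \<Rightarrow> real" where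
  "covering_radius a = 5 * sqrt 3 / 24 * a"

lemma covering_radius_eq: "covering_radius a = a * sqrt (75/576)"
proof -
  have "sqrt (75/576) = 5 * sqrt 3 / 24"
    by (rule real_sqrt_unique) (simp_all add: power_divide power_mult_distrib)
  then show ?thesis unfolding covering_radius_def by simp
qed

lemma dist_covering_radius_iff:
  assumes "0 < a"
  shows "dist x y \<le> covering_radius a \<longleftrightarrow> sqdist3 (coords a x) (coords a y) \<le> 75/576"
    "dist x y < covering_radius a \<longleftrightarrow> sqdist3 (coords a x) (coords a y) < 75/576"
    "dist x y = covering_radius a \<longleftrightarrow> sqdist3 (coords a x) (coords a y) = 75/576"
  unfolding covering_radius_eq dist_norm norm_eq_sqdist3_coords[OF assms] using assms by simp_all

lemma L2_point_within_covering_radius: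
  assumes "0 < a"
  obtains p where "p \<in> L2 a" "dist x p \<le> covering_radius a"
    "x \<notin> Lambda a \<Longrightarrow> dist x p < covering_radius a"
proof -
  obtain y where y: "in_L2 y" "sqdist3 (coords a x) y \<le> 75/576"
    "\<not> in_Lambda (coords a x) \<Longrightarrow> sqdist3 (coords a x) y < 75/576"
    using covered_everywhere unfolding covered_def by blast
  obtain u v w where "y = (u, v, w)" by (cases y)
  with assms have "coords a (pt (a * u) (a * v) (a * w)) = y" by (simp add: coords_scaled_pt)
  with y assms show ?thesis
    by (intro that[of "pt (a * u) (a * v) (a * w)"])
      (simp_all add: mem_L2_iff mem_Lambda_iff dist_covering_radius_iff)
qed

lemma covering_radius_le_dist_Lambda_L2:
  assumes "0 < a" "x \<in> Lambda a" "p \<in> L2 a"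
  shows "covering_radius a \<le> dist x p"
proof -
  have "75/576 \<le> sqdist3 (coords a x) (coords a p)"
    using assms by (intro sqdist3_Lambda_L2_ge) (simp_all add: mem_L2_iff mem_Lambda_iff)
  then show ?thesis using dist_covering_radius_iff(2)[OF assms(1), of x p] by linarith
qed

lemma infdist_L2:
  assumes "0 < a"
  shows "infdist x (L2 a) \<le> covering_radius a"
    "x \<notin> Lambda a \<Longrightarrow> infdist x (L2 a) < covering_radius a"
    "x \<in> Lambda a \<Longrightarrow> infdist x (L2 a) = covering_radius a"
proof -
  obtain p where p: "p \<in> L2 a" "dist x p \<le> covering_radius a"
    "x \<notin> Lambda a \<Longrightarrow> dist x p < covering_radius a"
    using L2_point_within_covering_radius[OF assms] by blast
  show le: "infdist x (L2 a) \<le> covering_radius a"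
    using infdist_le2[OF p(1,2)] .
  show "x \<notin> Lambda a \<Longrightarrow> infdist x (L2 a) < covering_radius a"
    using infdist_le[OF p(1), of x] p(3) by linarith
  assume "x \<in> Lambda a"
  have ne: "L2 a \<noteq> {}" using p(1) by blast
  have "covering_radius a \<le> infdist x (L2 a)"
    unfolding infdist_notempty[OF ne]
    by (rule cINF_greatest[OF ne]) (rule covering_radius_le_dist_Lambda_L2[OF assms \<open>x \<in> Lambda a\<close>])
  with le show "infdist x (L2 a) = covering_radius a" by linarith
qed

lemma nearest_L2_points_to_deep_hole:
  assumes "0 < a"
  shows "{p \<in> L2 a. norm (pt (5*a/24) (5*a/24) (5*a/24) - p) = covering_radius a}
    = {pt 0 0 0, pt 0 (a/4) (a/2), pt 0 (a/2) (a/4), pt (a/4) (a/2) 0,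
       pt (a/2) (a/4) 0, pt (a/4) 0 (a/2), pt (a/2) 0 (a/4)}"
proof -
  let ?S = "{(0, 0, 0), (0, 1/4, 1/2), (0, 1/2, 1/4), (1/4, 1/2, 0), (1/2, 1/4, 0), (1/4, 0, 1/2), (1/2, 0, 1/4)}
    :: (real \<times> real \<times> real) set"
  have center: "coords a (pt (5*a/24) (5*a/24) (5*a/24)) = (5/24, 5/24, 5/24)"
    using assms by (simp add: coords_def)
  have "norm (pt (5*a/24) (5*a/24) (5*a/24) - p) = covering_radius a
      \<longleftrightarrow> sqdist3 (5/24, 5/24, 5/24) (coords a p) = 75/576" for p
    using dist_covering_radius_iff(3)[OF assms] center by (simp add: dist_norm)
  moreover have "in_L2 y \<and> sqdist3 (5/24, 5/24, 5/24) y = 75/576 \<longleftrightarrow> y \<in> ?S" for y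
  proof
    show "in_L2 y \<and> sqdist3 (5/24, 5/24, 5/24) y = 75/576 \<Longrightarrow> y \<in> ?S"
      using nearest_L2_points_to_center[of y] by simp
    show "y \<in> ?S \<Longrightarrow> in_L2 y \<and> sqdist3 (5/24, 5/24, 5/24) y = 75/576"
      using in_L2_points by (auto simp: power_divide simp del: in_L2.simps)
  qed
  ultimately have "p \<in> L2 a \<and> norm (pt (5*a/24) (5*a/24) (5*a/24) - p) = covering_radius a \<longleftrightarrow> coords a p \<in> ?S"
    for p
    using mem_L2_iff[OF assms] by blast
  moreover have "p \<in> {pt 0 0 0, pt 0 (a/4) (a/2), pt 0 (a/2) (a/4), pt (a/4) (a/2) 0,
       pt (a/2) (a/4) 0, pt (a/4) 0 (a/2), pt (a/2) 0 (a/4)} \<longleftrightarrow> coords a p \<in> ?S" for p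
    using assms by (simp add: eq_scaled_pt_iff[symmetric])
  ultimately show ?thesis by blast
qed

theorem mainTheorem5:
  fixes a :: real
  assumes "a > 0"
  shows "(SUP x::real^3. infdist x (L2 a)) = 5 * sqrt 3 / 24 * a
    \<and> {x::real^3. infdist x (L2 a) = 5 * sqrt 3 / 24 * a} = Lambda a
    \<and> {p \<in> L2 a. norm (pt (5*a/24) (5*a/24) (5*a/24) - p) = 5 * sqrt 3 / 24 * a}
         = {pt 0 0 0, pt 0 (a/4) (a/2), pt 0 (a/2) (a/4), pt (a/4) (a/2) 0,
            pt (a/2) (a/4) 0, pt (a/4) 0 (a/2), pt (a/2) 0 (a/4)}
    \<and> (\<forall>p \<in> L2 a. norm (pt (5*a/24) (5*a/24) (5*a/24) - p) \<ge> 5 * sqrt 3 / 24 * a)"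
proof -
  let ?x0 = "pt (5*a/24) (5*a/24) (5*a/24)"
  have x0: "?x0 \<in> Lambda a"
    using assms in_Lambda_center by (simp add: mem_Lambda_iff coords_def)
  have "(SUP x::real^3. infdist x (L2 a)) = covering_radius a"
    by (rule cSup_eq_maximum)
      (auto intro: range_eqI[where f = "\<lambda>x. infdist x (L2 a)", OF infdist_L2(3)[OF assms x0, symmetric]]
        simp: infdist_L2(1)[OF assms])
  moreover have "{x. infdist x (L2 a) = covering_radius a} = Lambda a"
    using infdist_L2[OF assms] by force
  moreover have "\<forall>p \<in> L2 a. covering_radius a \<le> norm (?x0 - p)"
    using covering_radius_le_dist_Lambda_L2[OF assms x0] by (simp add: dist_norm)
  ultimately show ?thesis
    using nearest_L2_points_to_deep_hole[OF assms] unfolding covering_radius_def by simp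
qed

end
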